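(* For the CRF surrogate with decoding $d$ described in the context, the calibration function satisfies, for all $\varepsilon\ge0$, $$\zeta(\varepsilon)\ge\frac{\varepsilon^2}{8\,c_{\psi}^2\,c_{\phi}^2},\qquad c_\psi=\max_{z\in\mathcal{Z}}\|\psi(z)\|_2,\quad c_\phi=\max_{y\in\mathcal{Y}}\|\phi(y)\|_2 .$$
   Context: $\mathcal{Y},\mathcal{Z}$ finite sets, $\mathcal{H}$ a finite-dimensional real Euclidean space, $\psi:\mathcal{Z}\to\mathcal{H}$, $\phi:\mathcal{Y}\to\mathcal{H}$, $c\in\mathbb{R}$, $L(z,y)=\langle\psi(z),\phi(y)\rangle+c$. For $q\in\operatorname{Prob}(\mathcal{Y})$: $\mu(q)=\sum_y q(y)\phi(y)$, $\ell(z,q)=\mathbb{E}_{Y\sim q}L(z,Y)$, $\delta\ell(z,q)=\ell(z,q)-\min_{z'}\ell(z',q)$. The CRF surrogate is $S(v,y)=\log\sum_{y'\in\mathcal{Y}}\exp\langle v,\phi(y')\rangle-\langle v,\phi(y)\rangle$ for $v\in\mathcal{V}=\mathcal{H}$; $s(v,q)=\mathbb{E}_{Y\sim q}S(v,Y)$, $\delta s(v,q)=s(v,q)-\inf_{v'}s(v',q)$. For $v\in\mathcal{H}$ let $p_v(y)=\exp\langle\phi(y),v\rangle/\sum_{y'}\exp\langle\phi(y'),v\rangle$ and $m(v)=\sum_y p_v(y)\phi(y)$ (the marginals). The decoding is $d(v)$ = an element of $\arg\min_{z\in\mathcal{Z}}\langle\psi(z),m(v)\rangle$ (fixed tie-breaking).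 The calibration function is $\zeta(\varepsilon)=\inf\{\delta s(v,q):v\in\mathcal{H},q\in\operatorname{Prob}(\mathcal{Y}),\delta\ell(d(v),q)\ge\varepsilon\}$ ($\inf\emptyset=+\infty$). *)

theory Defs
  imports "HOL-Analysis.Analysis" "HOL-Library.Extended_Real"
begin

text \<open>Y = 'y, Z = 'z finite types; H = 'h a finite-dimensional real Euclidean space.
  Prob(Y) = nonnegative functions 'y => real summing to 1.\<close>

definition is_prob :: "('y::finite \<Rightarrow> real) \<Rightarrow> bool" where
  "is_prob q \<longleftrightarrow> (\<forall>y. 0 \<le> q y) \<and> (\<Sum>y\<in>UNIV. q y) = 1"

definition task_loss :: "('z \<Rightarrow> 'h::euclidean_space) \<Rightarrow> ('y \<Rightarrow> 'h) \<Rightarrow> real \<Rightarrow> 'z \<Rightarrow> 'y \<Rightarrow> real" where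
  "task_loss \<psi> \<phi> c z y = inner (\<psi> z) (\<phi> y) + c"

definition cond_loss :: "('z \<Rightarrow> 'h::euclidean_space) \<Rightarrow> ('y::finite \<Rightarrow> 'h) \<Rightarrow> real \<Rightarrow> 'z \<Rightarrow> ('y \<Rightarrow> real) \<Rightarrow> real" where
  "cond_loss \<psi> \<phi> c z q = (\<Sum>y\<in>UNIV. q y * task_loss \<psi> \<phi> c z y)"

definition excess_loss :: "('z::finite \<Rightarrow> 'h::euclidean_space) \<Rightarrow> ('y::finite \<Rightarrow> 'h) \<Rightarrow> real \<Rightarrow> 'z \<Rightarrow> ('y \<Rightarrow> real) \<Rightarrow> real" where
  "excess_loss \<psi> \<phi> c z q = cond_loss \<psi> \<phi> c z q - Min (range (\<lambda>z'. cond_loss \<psi> \<phi> c z' q))"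

definition crf_surrogate :: "('y::finite \<Rightarrow> 'h::euclidean_space) \<Rightarrow> 'h \<Rightarrow> 'y \<Rightarrow> real" where
  "crf_surrogate \<phi> v y = ln (\<Sum>y'\<in>UNIV. exp (inner v (\<phi> y'))) - inner v (\<phi> y)"

definition cond_surrogate :: "('y::finite \<Rightarrow> 'h::euclidean_space) \<Rightarrow> 'h \<Rightarrow> ('y \<Rightarrow> real) \<Rightarrow> real" where
  "cond_surrogate \<phi> v q = (\<Sum>y\<in>UNIV. q y * crf_surrogate \<phi> v y)"

definition excess_surrogate :: "('y::finite \<Rightarrow> 'h::euclidean_space) \<Rightarrow> 'h \<Rightarrow> ('y \<Rightarrow> real) \<Rightarrow> real" where
  "excess_surrogate \<phi> v q = cond_surrogate \<phi> v q - (INF v'. cond_surrogate \<phi> v' q)"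

definition crf_prob :: "('y::finite \<Rightarrow> 'h::euclidean_space) \<Rightarrow> 'h \<Rightarrow> 'y \<Rightarrow> real" where
  "crf_prob \<phi> v y = exp (inner (\<phi> y) v) / (\<Sum>y'\<in>UNIV. exp (inner (\<phi> y') v))"

definition marginals :: "('y::finite \<Rightarrow> 'h::euclidean_space) \<Rightarrow> 'h \<Rightarrow> 'h" where
  "marginals \<phi> v = (\<Sum>y\<in>UNIV. crf_prob \<phi> v y *\<^sub>R \<phi> y)"

definition is_decoding :: "('z::finite \<Rightarrow> 'h::euclidean_space) \<Rightarrow> ('y::finite \<Rightarrow> 'h) \<Rightarrow> ('h \<Rightarrow> 'z) \<Rightarrow> bool" where
  "is_decoding \<psi> \<phi> d \<longleftrightarrow>
     (\<forall>v z. inner (\<psi> (d v)) (marginals \<phi> v) \<le> inner (\<psi> z) (marginals \<phi> v))"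

text \<open>Calibration function, valued in extended reals (Inf of empty set = +infinity).\<close>
definition calibration :: "('z::finite \<Rightarrow> 'h::euclidean_space) \<Rightarrow> ('y::finite \<Rightarrow> 'h) \<Rightarrow> real \<Rightarrow> ('h \<Rightarrow> 'z) \<Rightarrow> real \<Rightarrow> ereal" where
  "calibration \<psi> \<phi> c d \<epsilon> =
     Inf {ereal (excess_surrogate \<phi> v q) | v q. is_prob q \<and> excess_loss \<psi> \<phi> c (d v) q \<ge> \<epsilon>}"

end

theory Submission
  imports Defs "HOL-Probability.Hoeffding"
begin

text \<open>Write \<open>g = m(v) - \<mu>(q)\<close>. On the loss side, since \<open>d(v)\<close> minimises \<open>\<langle>\<psi> z, m(v)\<rangle>\<close>,
  Cauchy-Schwarz gives \<open>\<delta>\<ell>(d(v), q) \<le> 2 c\<^sub>\<psi> \<parallel>g\<parallel>\<close>. On the surrogate side, the log-partition function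
  \<open>ln Z\<close> has gradient \<open>m(v)\<close>, and Hoeffding's lemma applied to the Gibbs distribution \<open>p\<^sub>v\<close> shows it is
  \<open>c\<^sub>\<phi>\<^sup>2\<close>-smooth: \<open>ln Z(v + w) \<le> ln Z(v) + \<langle>w, m(v)\<rangle> + c\<^sub>\<phi>\<^sup>2 \<parallel>w\<parallel>\<^sup>2 / 2\<close>. One gradient step
  \<open>w = -g / c\<^sub>\<phi>\<^sup>2\<close> then lowers \<open>s(\<cdot>, q)\<close> by \<open>\<parallel>g\<parallel>\<^sup>2 / (2 c\<^sub>\<phi>\<^sup>2)\<close>, so \<open>\<delta>s(v, q) \<ge> \<parallel>g\<parallel>\<^sup>2 / (2 c\<^sub>\<phi>\<^sup>2)\<close>.\<close>

lemma exp_le_chord: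
  fixes B x :: real
  assumes "B > 0" "\<bar>x\<bar> \<le> B"
  shows "exp x \<le> (B - x) / (2*B) * exp (- B) + (B + x) / (2*B) * exp B"
proof -
  define u where "u = (B + x) / (2*B)"
  have u: "0 \<le> u" "u \<le> 1" using assms by (auto simp: u_def field_simps)
  have "exp ((1 - u) *\<^sub>R (-B) + u *\<^sub>R B) \<le> (1 - u) * exp (-B) + u * exp B"
    using convex_onD[OF convex_on_exp[of 1], of u "-B" B] u by simp
  moreover have "(1 - u) *\<^sub>R (-B) + u *\<^sub>R B = x" and "1 - u = (B - x) / (2*B)"
    using assms by (simp_all add: u_def field_simps)
  ultimately show ?thesis by (simp add: u_def)
qed

lemma two_point_exp_mean_le:
  fixes B m :: real
  assumes "B > 0" "\<bar>m\<bar> \<le> B"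
  shows "(B - m) / (2*B) * exp (- B) + (B + m) / (2*B) * exp B \<le> exp (m + B\<^sup>2 / 2)"
proof -
  define \<pi> where "\<pi> = (B + m) / (2*B)"
  have "\<pi> \<ge> 0" using assms by (simp add: \<pi>_def)
  then have pos: "1 + \<pi> * (exp (2*B) - 1) > 0"
    using assms by (intro add_pos_nonneg mult_nonneg_nonneg) auto
  have "(B - m) / (2*B) * exp (- B) + (B + m) / (2*B) * exp B
      = exp (- B) * (1 + \<pi> * (exp (2*B) - 1))"
    using assms by (simp add: \<pi>_def field_simps flip: exp_add mult_exp_exp)
  also have "\<dots> = exp (- B + ln (1 + \<pi> * (exp (2*B) - 1)))"
    using pos by (simp only: exp_add exp_ln)
  also have "\<dots> \<le> exp (- B + 2*B*\<pi> + (2*B)\<^sup>2 / 8)"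
    using Hoeffdings_lemma_aux[of "2*B" \<pi>] \<open>\<pi> \<ge> 0\<close> assms by simp
  also have "- B + 2*B*\<pi> + (2*B)\<^sup>2 / 8 = m + B\<^sup>2 / 2"
    using assms by (simp add: \<pi>_def field_simps power2_eq_square)
  finally show ?thesis .
qed

text \<open>Hoeffding's lemma for a finitely supported distribution; with the range \<open>[-B, B]\<close>
  the exponent \<open>(2B)\<^sup>2/8\<close> becomes \<open>B\<^sup>2/2\<close>.\<close>

lemma Hoeffdings_lemma_finite:
  fixes p X :: "'a \<Rightarrow> real"
  assumes "finite A" and p_nonneg: "\<And>y. y \<in> A \<Longrightarrow> p y \<ge> 0" and p_sum: "(\<Sum>y\<in>A. p y) = 1"
    and X_bound: "\<And>y. y \<in> A \<Longrightarrow> \<bar>X y\<bar> \<le> B"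
  shows "(\<Sum>y\<in>A. p y * exp (X y)) \<le> exp ((\<Sum>y\<in>A. p y * X y) + B\<^sup>2 / 2)"
proof (cases "B > 0")
  case False
  then have "\<And>y. y \<in> A \<Longrightarrow> X y = 0" using X_bound by fastforce
  then show ?thesis using p_sum by simp
next
  case True
  define m where "m = (\<Sum>y\<in>A. p y * X y)"
  have "\<bar>m\<bar> \<le> (\<Sum>y\<in>A. p y * B)"
    unfolding m_def using p_nonneg X_bound
    by (intro order.trans[OF sum_abs] sum_mono) (simp add: abs_mult mult_left_mono)
  then have m_bound: "\<bar>m\<bar> \<le> B" using p_sum by (simp flip: sum_distrib_right)
  have "(\<Sum>y\<in>A. p y * exp (X y))
      \<le> (\<Sum>y\<in>A. p y * ((B - X y) / (2*B) * exp (- B) + (B + X y) / (2*B) * exp B))"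
    using True p_nonneg X_bound by (intro sum_mono mult_left_mono exp_le_chord) auto
  also have "\<dots> = (\<Sum>y\<in>A. p y * ((exp (- B) + exp B) / 2) + p y * X y * ((exp B - exp (- B)) / (2*B)))"
    using True by (intro sum.cong refl) (simp add: field_simps)
  also have "\<dots> = (B - m) / (2*B) * exp (- B) + (B + m) / (2*B) * exp B"
    unfolding sum.distrib m_def p_sum sum_distrib_right[symmetric] using True
    by (simp add: field_simps)
  also have "\<dots> \<le> exp (m + B\<^sup>2 / 2)" by (rule two_point_exp_mean_le[OF True m_bound])
  finally show ?thesis by (simp add: m_def)
qed

lemma norm_le_Max_range: "norm (f (x::'a::finite)) \<le> Max (range (\<lambda>x. norm (f x)))"
  by (rule Max_ge) auto

definition feature_mean :: "('y::finite \<Rightarrow> 'h::euclidean_space) \<Rightarrow> ('y \<Rightarrow> real) \<Rightarrow> 'h" where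
  "feature_mean \<phi> q = (\<Sum>y\<in>UNIV. q y *\<^sub>R \<phi> y)"

definition crf_partition :: "('y::finite \<Rightarrow> 'h::euclidean_space) \<Rightarrow> 'h \<Rightarrow> real" where
  "crf_partition \<phi> v = (\<Sum>y\<in>UNIV. exp (inner v (\<phi> y)))"

lemma crf_partition_pos: "crf_partition \<phi> v > 0"
  unfolding crf_partition_def by (intro sum_pos) auto

lemma inner_feature_mean: "inner w (feature_mean \<phi> q) = (\<Sum>y\<in>UNIV. q y * inner w (\<phi> y))"
  by (simp add: feature_mean_def inner_sum_right)

lemma cond_surrogate_eq:
  assumes "is_prob q"
  shows "cond_surrogate \<phi> v q = ln (crf_partition \<phi> v) - inner v (feature_mean \<phi> q)"
  using assms
  by (simp add: cond_surrogate_def crf_surrogate_def crf_partition_def is_prob_def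
      inner_feature_mean right_diff_distrib sum_subtractf flip: sum_distrib_right)

lemma crf_surrogate_nonneg: "crf_surrogate \<phi> v y \<ge> 0"
proof -
  have "exp (inner v (\<phi> y)) \<le> (\<Sum>y'\<in>UNIV. exp (inner v (\<phi> y')))"
    by (rule member_le_sum) auto
  then have "ln (exp (inner v (\<phi> y))) \<le> ln (\<Sum>y'\<in>UNIV. exp (inner v (\<phi> y')))"
    by (subst ln_le_cancel_iff) (auto intro: sum_pos)
  then show ?thesis unfolding crf_surrogate_def by simp
qed

lemma cond_surrogate_nonneg: "is_prob q \<Longrightarrow> cond_surrogate \<phi> v q \<ge> 0"
  unfolding cond_surrogate_def is_prob_def
  by (intro sum_nonneg mult_nonneg_nonneg crf_surrogate_nonneg) auto

lemma excess_surrogate_ge_diff: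
  assumes "is_prob q"
  shows "cond_surrogate \<phi> v q - cond_surrogate \<phi> v' q \<le> excess_surrogate \<phi> v q"
proof -
  have "(INF v'. cond_surrogate \<phi> v' q) \<le> cond_surrogate \<phi> v' q"
    by (rule cINF_lower) (auto intro!: bdd_belowI[where m=0] cond_surrogate_nonneg assms)
  then show ?thesis unfolding excess_surrogate_def by simp
qed

lemma is_prob_crf_prob: "is_prob (crf_prob \<phi> v)"
  using crf_partition_pos[of \<phi> v]
  by (auto simp: is_prob_def crf_prob_def crf_partition_def inner_commute
      intro!: divide_nonneg_pos sum_pos simp flip: sum_divide_distrib)

lemma crf_partition_add:
  "crf_partition \<phi> (v + w) = crf_partition \<phi> v * (\<Sum>y\<in>UNIV. crf_prob \<phi> v y * exp (inner w (\<phi> y)))"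
proof -
  have "(\<Sum>y\<in>UNIV. exp (inner (\<phi> y) v)) = crf_partition \<phi> v"
    by (simp add: crf_partition_def inner_commute)
  then show ?thesis
    using crf_partition_pos[of \<phi> v]
    by (simp add: crf_prob_def sum_distrib_left inner_add_right inner_commute exp_add
        crf_partition_def[of \<phi> "v + w"])
qed

text \<open>Smoothness of the log-partition function, whose gradient at \<open>v\<close> is \<open>marginals \<phi> v\<close>.\<close>

lemma ln_crf_partition_add_le:
  fixes \<phi> :: "'y::finite \<Rightarrow> 'h::euclidean_space"
  defines "C \<equiv> Max (range (\<lambda>y. norm (\<phi> y)))"
  shows "ln (crf_partition \<phi> (v + w))
    \<le> ln (crf_partition \<phi> v) + inner w (marginals \<phi> v) + (C * norm w)\<^sup>2 / 2"
proof -
  have bound: "\<bar>inner w (\<phi> y)\<bar> \<le> C * norm w" for y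
  proof -
    have "\<bar>inner w (\<phi> y)\<bar> \<le> norm w * norm (\<phi> y)" by (rule Cauchy_Schwarz_ineq2)
    also have "\<dots> \<le> norm w * C" unfolding C_def by (intro mult_left_mono norm_le_Max_range) auto
    finally show ?thesis by (simp add: mult.commute)
  qed
  have "(\<Sum>y\<in>UNIV. crf_prob \<phi> v y * exp (inner w (\<phi> y)))
      \<le> exp ((\<Sum>y\<in>UNIV. crf_prob \<phi> v y * inner w (\<phi> y)) + (C * norm w)\<^sup>2 / 2)"
    using is_prob_crf_prob[of \<phi> v] bound
    by (intro Hoeffdings_lemma_finite) (auto simp: is_prob_def)
  also have "(\<Sum>y\<in>UNIV. crf_prob \<phi> v y * inner w (\<phi> y)) = inner w (marginals \<phi> v)"
    by (simp add: marginals_def inner_sum_right)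
  finally have S_le: "(\<Sum>y\<in>UNIV. crf_prob \<phi> v y * exp (inner w (\<phi> y)))
      \<le> exp (inner w (marginals \<phi> v) + (C * norm w)\<^sup>2 / 2)" .
  have S_pos: "(\<Sum>y\<in>UNIV. crf_prob \<phi> v y * exp (inner w (\<phi> y))) > 0"
    using crf_partition_pos[of \<phi> "v + w"] crf_partition_pos[of \<phi> v]
    by (simp add: crf_partition_add zero_less_mult_iff)
  show ?thesis
    using ln_le_cancel_iff[OF S_pos exp_gt_zero, THEN iffD2, OF S_le] S_pos crf_partition_pos[of \<phi> v]
    by (simp add: crf_partition_add ln_mult)
qed

lemma cond_surrogate_add_le:
  fixes \<phi> :: "'y::finite \<Rightarrow> 'h::euclidean_space"
  assumes q: "is_prob q"
  defines "C \<equiv> Max (range (\<lambda>y. norm (\<phi> y)))"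
  shows "cond_surrogate \<phi> (v + w) q
    \<le> cond_surrogate \<phi> v q + inner w (marginals \<phi> v - feature_mean \<phi> q) + (C * norm w)\<^sup>2 / 2"
  using ln_crf_partition_add_le[of \<phi> v w]
  by (simp add: cond_surrogate_eq[OF q] C_def inner_diff_right inner_add_left)

text \<open>If \<open>C = 0\<close> the left-hand side is \<open>0\<close>, because \<open>x / 0 = 0\<close>.\<close>

lemma excess_surrogate_ge_norm_marginals:
  fixes \<phi> :: "'y::finite \<Rightarrow> 'h::euclidean_space"
  assumes q: "is_prob q"
  defines "C \<equiv> Max (range (\<lambda>y. norm (\<phi> y)))"
  shows "(norm (marginals \<phi> v - feature_mean \<phi> q))\<^sup>2 / (2 * C\<^sup>2) \<le> excess_surrogate \<phi> v q"
proof (cases "C = 0")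
  case True
  then show ?thesis using excess_surrogate_ge_diff[OF q, of \<phi> v v] by simp
next
  case False
  define g where "g = marginals \<phi> v - feature_mean \<phi> q"
  define w where "w = - (1 / C\<^sup>2) *\<^sub>R g"
  have "inner w g + (C * norm w)\<^sup>2 / 2 = - (norm g)\<^sup>2 / (2 * C\<^sup>2)"
    using False by (simp add: w_def power2_norm_eq_inner power_mult_distrib field_simps)
  then have "cond_surrogate \<phi> (v + w) q \<le> cond_surrogate \<phi> v q - (norm g)\<^sup>2 / (2 * C\<^sup>2)"
    using cond_surrogate_add_le[OF q, of \<phi> v w] by (simp add: C_def g_def)
  then show ?thesis
    using excess_surrogate_ge_diff[OF q, of \<phi> v "v + w"] by (simp add: g_def)
qed

lemma cond_loss_eq:
  "is_prob q \<Longrightarrow> cond_loss \<psi> \<phi> c z q = inner (\<psi> z) (feature_mean \<phi> q) + c"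
  by (simp add: cond_loss_def task_loss_def is_prob_def distrib_left sum.distrib
      inner_feature_mean flip: sum_distrib_right)

text \<open>Since \<open>d v\<close> beats the true minimiser \<open>z\<close> against \<open>m(v)\<close>, the excess loss is at most
  \<open>\<langle>\<psi> (d v) - \<psi> z, \<mu>(q) - m(v)\<rangle>\<close>.\<close>

lemma excess_loss_decoding_le:
  fixes \<psi> :: "'z::finite \<Rightarrow> 'h::euclidean_space" and \<phi> :: "'y::finite \<Rightarrow> 'h"
  assumes d: "is_decoding \<psi> \<phi> d" and q: "is_prob q"
  defines "C \<equiv> Max (range (\<lambda>z. norm (\<psi> z)))"
  shows "excess_loss \<psi> \<phi> c (d v) q \<le> 2 * C * norm (marginals \<phi> v - feature_mean \<phi> q)"
proof -
  define m \<mu> where "m = marginals \<phi> v" and "\<mu> = feature_mean \<phi> q"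
  have "Min (range (\<lambda>z'. cond_loss \<psi> \<phi> c z' q)) \<in> range (\<lambda>z'. cond_loss \<psi> \<phi> c z' q)"
    by (rule Min_in) auto
  then obtain z where z: "Min (range (\<lambda>z'. cond_loss \<psi> \<phi> c z' q)) = cond_loss \<psi> \<phi> c z q"
    by blast
  have "inner (\<psi> (d v)) m \<le> inner (\<psi> z) m" using d by (simp add: is_decoding_def m_def)
  then have "excess_loss \<psi> \<phi> c (d v) q \<le> inner (\<psi> (d v) - \<psi> z) (\<mu> - m)"
    unfolding excess_loss_def z by (simp add: cond_loss_eq[OF q] \<mu>_def inner_diff_left inner_diff_right)
  also have "\<dots> \<le> norm (\<psi> (d v) - \<psi> z) * norm (m - \<mu>)"
    using norm_cauchy_schwarz[of "\<psi> (d v) - \<psi> z" "\<mu> - m"] by (simp add: norm_minus_commute)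
  also have "\<dots> \<le> (C + C) * norm (m - \<mu>)"
  proof -
    have "norm (\<psi> (d v) - \<psi> z) \<le> C + C"
      using norm_triangle_ineq4[of "\<psi> (d v)" "\<psi> z"] norm_le_Max_range[of \<psi> "d v"]
        norm_le_Max_range[of \<psi> z]
      unfolding C_def by linarith
    then show ?thesis by (intro mult_right_mono) auto
  qed
  finally show ?thesis by (simp add: m_def \<mu>_def)
qed

theorem proposition5p2:
  fixes \<psi> :: "'z::finite \<Rightarrow> 'h::euclidean_space" and \<phi> :: "'y::finite \<Rightarrow> 'h"
    and c :: real and d :: "'h \<Rightarrow> 'z" and \<epsilon> :: real
  assumes "is_decoding \<psi> \<phi> d" and "\<epsilon> \<ge> 0"
  shows "calibration \<psi> \<phi> c d \<epsilon> \<ge>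
    ereal (\<epsilon>\<^sup>2 / (8 * (Max (range (\<lambda>z. norm (\<psi> z))))\<^sup>2 * (Max (range (\<lambda>y. norm (\<phi> y))))\<^sup>2))"
  unfolding calibration_def
proof (rule Inf_greatest, clarify)
  fix v q assume q: "is_prob q" and \<epsilon>_le: "\<epsilon> \<le> excess_loss \<psi> \<phi> c (d v) q"
  define C\<psi> C\<phi> where "C\<psi> = Max (range (\<lambda>z. norm (\<psi> z)))" and "C\<phi> = Max (range (\<lambda>y. norm (\<phi> y)))"
  define r where "r = norm (marginals \<phi> v - feature_mean \<phi> q)"
  have "\<epsilon> \<le> 2 * C\<psi> * r"
    using \<epsilon>_le excess_loss_decoding_le[OF assms(1) q, of c v] by (simp add: C\<psi>_def r_def)
  then have "\<epsilon>\<^sup>2 \<le> 4 * C\<psi>\<^sup>2 * r\<^sup>2"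
    using power_mono[of \<epsilon> "2 * C\<psi> * r" 2] assms(2) by (simp add: power_mult_distrib)
  then have "\<epsilon>\<^sup>2 / (8 * C\<psi>\<^sup>2 * C\<phi>\<^sup>2) \<le> 4 * C\<psi>\<^sup>2 * r\<^sup>2 / (8 * C\<psi>\<^sup>2 * C\<phi>\<^sup>2)"
    by (intro divide_right_mono) auto
  also have "\<dots> \<le> r\<^sup>2 / (2 * C\<phi>\<^sup>2)"
    by (cases "C\<psi> = 0") simp_all
  also have "\<dots> \<le> excess_surrogate \<phi> v q"
    using excess_surrogate_ge_norm_marginals[OF q, of \<phi> v] by (simp add: r_def C\<phi>_def)
  finally show "ereal (\<epsilon>\<^sup>2 / (8 * C\<psi>\<^sup>2 * C\<phi>\<^sup>2)) \<le> ereal (excess_surrogate \<phi> v q)"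
    by simp
qed

end
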